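(* Consider the publishing problem with constant publishing cost, i.e. $\alpha=0$ so that $C^{(p)}_t(N)=\beta\,\mathbb{1}[N\neq\emptyset]$ for some $\beta\ge 0$ (delay costs arbitrary non-negative, price dynamics $R$ arbitrary). Then there exists an optimal policy $\pi^*$ which at every step publishes either all available transactions or none of them, i.e. for every $t$, either $N^{\pi^*}_t=Q^{\pi^*}_t$ or $N^{\pi^*}_t=\emptyset$.
   Context: The publishing problem is the following infinite-horizon Markov decision process in discrete time $t=0,1,2,\dots$. At each time step $t$ a new transaction $H_t$ is created (transactions are indexed by their creation time). The state at time $t$ is $(t,P_t,Q_t)$, where $P_t\ge 0$ is the current gas price and $Q_t$ is the set of unpublished transactions (with $Q_0=\emptyset$). A policy $\pi$ chooses a subset $N^\pi_t=\pi(t,Q_t,P_t)\subseteq Q_t$ to publish, incurring cost $C_t(P_t,Q_t,N^\pi_t)=P_t\,C^{(p)}_t(N^\pi_t)+C^{(d)}_t(Q_t\setminus N^\pi_t)$. The state then updates by $Q_{t+1}=(Q_t\setminus N^\pi_t)\cup\{H_t\}$ and $P_{t+1}=R(P_t)$, where $R$ is a random function (Markov transition) on prices whose distribution is known. The publishing cost is $C^{(p)}_t(N)=\alpha|N|+\beta\,\mathbb{1}[N\neq\emptyset]$ with $\alpha,\beta\ge0$. The delay cost is $C^{(d)}_t(N)=\sum_{H_\tau\in N}C^{(d)}_{H_\tau}(t-\tau)$, where each $C^{(d)}_{H_\tau}$ is a non-negative function of the waiting time. The expected total cost of $\pi$ is $C(\pi)=\mathbb{E}\left[\sum_t\gamma^t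 C_t(P_t,Q^\pi_t,N^\pi_t)\right]$ with discount factor $0<\gamma<1$, and $\pi^*$ is optimal if $C(\pi^* )=\min_\pi C(\pi)$. *)

theory Defs
  imports "HOL-Probability.Probability"
begin

text \<open>Transactions are identified with their creation time: transaction H_tau is the natural
number tau.  A (deterministic Markov) policy is a
map pi t Q p giving the set of transactions published at time t in queue Q at gas price p.\<close>

type_synonym policy = "nat \<Rightarrow> nat set \<Rightarrow> real \<Rightarrow> nat set"

definition pub_cost :: "real \<Rightarrow> real \<Rightarrow> nat set \<Rightarrow> real" where
  "pub_cost \<alpha> \<beta> N = \<alpha> * real (card N) + \<beta> * (if N \<noteq> {} then 1 else 0)"

text \<open>Delay cost C^(d)_t(N) = sum over H_tau in N of C^(d)_{H_tau}(t - tau);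
  d tau w is the delay cost of transaction H_tau after waiting w steps.\<close>
definition delay_cost :: "(nat \<Rightarrow> nat \<Rightarrow> real) \<Rightarrow> nat \<Rightarrow> nat set \<Rightarrow> real" where
  "delay_cost d t N = (\<Sum>\<tau>\<in>N. d \<tau> (t - \<tau>))"

definition stage_cost ::
  "real \<Rightarrow> real \<Rightarrow> (nat \<Rightarrow> nat \<Rightarrow> real) \<Rightarrow> nat \<Rightarrow> real \<Rightarrow> nat set \<Rightarrow> nat set \<Rightarrow> real" where
  "stage_cost \<alpha> \<beta> d t p Q N = p * pub_cost \<alpha> \<beta> N + delay_cost d t (Q - N)"

definition admissible :: "policy \<Rightarrow> bool" where
  "admissible \<pi> \<longleftrightarrow>
     (\<forall>t Q p. \<pi> t Q p \<subseteq> Q) \<and>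
     (\<forall>t Q. finite Q \<longrightarrow> (\<lambda>p. \<pi> t Q p) \<in> borel \<rightarrow>\<^sub>M count_space UNIV)"

text \<open>Expected discounted cost of the first n steps, starting at time t in state (t, p, Q),
  where the price evolves by the Markov kernel K (P_{t+1} ~ K P_t):
  the expectation of sum_{s<n} gamma^s C_{t+s}, written via iterated integrals.\<close>
fun horizon_cost ::
  "(real \<Rightarrow> real measure) \<Rightarrow> real \<Rightarrow> real \<Rightarrow> real \<Rightarrow> (nat \<Rightarrow> nat \<Rightarrow> real) \<Rightarrow> policy
     \<Rightarrow> nat \<Rightarrow> nat \<Rightarrow> real \<Rightarrow> nat set \<Rightarrow> ennreal" where
  "horizon_cost K \<gamma> \<alpha> \<beta> d \<pi> 0 t p Q = 0"
| "horizon_cost K \<gamma> \<alpha> \<beta> d \<pi> (Suc n) t p Q =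
     ennreal (stage_cost \<alpha> \<beta> d t p Q (\<pi> t Q p))
     + ennreal \<gamma> * (\<integral>\<^sup>+ p'. horizon_cost K \<gamma> \<alpha> \<beta> d \<pi> n (Suc t) p' ((Q - \<pi> t Q p) \<union> {t}) \<partial>K p)"

text \<open>Expected total discounted cost C(pi) = E[sum_t gamma^t C_t] from initial price p0 and
  Q_0 = {} (monotone limit of the finite-horizon expected costs; costs are non-negative).\<close>
definition total_cost ::
  "(real \<Rightarrow> real measure) \<Rightarrow> real \<Rightarrow> real \<Rightarrow> real \<Rightarrow> (nat \<Rightarrow> nat \<Rightarrow> real) \<Rightarrow> real
     \<Rightarrow> policy \<Rightarrow> ennreal" where
  "total_cost K \<gamma> \<alpha> \<beta> d p0 \<pi> = (SUP n. horizon_cost K \<gamma> \<alpha> \<beta> d \<pi> n 0 p0 {})"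

definition optimal ::
  "(real \<Rightarrow> real measure) \<Rightarrow> real \<Rightarrow> real \<Rightarrow> real \<Rightarrow> (nat \<Rightarrow> nat \<Rightarrow> real) \<Rightarrow> real
     \<Rightarrow> policy \<Rightarrow> bool" where
  "optimal K \<gamma> \<alpha> \<beta> d p0 \<pi> \<longleftrightarrow> admissible \<pi> \<and>
     (\<forall>\<sigma>. admissible \<sigma> \<longrightarrow> total_cost K \<gamma> \<alpha> \<beta> d p0 \<pi> \<le> total_cost K \<gamma> \<alpha> \<beta> d p0 \<sigma>)"

end

theory Submission
  imports Defs
begin

text \<open>With \<open>\<alpha> = 0\<close> the publishing fee does not depend on how many transactions are published,
  so replacing a partial publication by publishing the whole queue costs the same fee, incurs no
  delay cost now, and leaves the smallest possible queue \<open>{t}\<close>.  Since prices are non-negative,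
  the value of the all-or-nothing problem is monotone in the queue, hence its finite-horizon
  values are lower bounds for the horizon costs of every admissible policy.  Their monotone limit
  satisfies the Bellman inequality, and the policy that is greedy with respect to this limit
  attains it, so it is optimal and publishes everything or nothing.\<close>

definition action_value ::
  "(real \<Rightarrow> real measure) \<Rightarrow> real \<Rightarrow> real \<Rightarrow> real \<Rightarrow> (nat \<Rightarrow> nat \<Rightarrow> real)
     \<Rightarrow> (nat \<Rightarrow> real \<Rightarrow> nat set \<Rightarrow> ennreal) \<Rightarrow> nat \<Rightarrow> real \<Rightarrow> nat set \<Rightarrow> nat set \<Rightarrow> ennreal" where
  "action_value K \<gamma> \<alpha> \<beta> d V t p Q N =
     ennreal (stage_cost \<alpha> \<beta> d t p Q N) + ennreal \<gamma> * (\<integral>\<^sup>+ p'. V (Suc t) p' ((Q - N) \<union> {t}) \<partial>K p)"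

lemma horizon_cost_Suc:
  "horizon_cost K \<gamma> \<alpha> \<beta> d \<pi> (Suc n) t p Q =
     action_value K \<gamma> \<alpha> \<beta> d (horizon_cost K \<gamma> \<alpha> \<beta> d \<pi> n) t p Q (\<pi> t Q p)"
  by (simp add: action_value_def)

lemma action_value_le:
  assumes "stage_cost \<alpha> \<beta> d t p Q N \<le> stage_cost \<alpha> \<beta> d t p Q' N'"
    and "AE p' in K p. V (Suc t) p' ((Q - N) \<union> {t}) \<le> W (Suc t) p' ((Q' - N') \<union> {t})"
  shows "action_value K \<gamma> \<alpha> \<beta> d V t p Q N \<le> action_value K \<gamma> \<alpha> \<beta> d W t p Q' N'"
  unfolding action_value_def
  using assms by (intro add_mono ennreal_leI mult_left_mono nn_integral_mono_AE) auto

lemma action_value_SUP: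
  assumes K: "K \<in> borel \<rightarrow>\<^sub>M prob_algebra borel" and inc: "incseq V"
    and meas: "\<And>n. (\<lambda>p'. V n (Suc t) p' ((Q - N) \<union> {t})) \<in> borel_measurable borel"
  shows "action_value K \<gamma> \<alpha> \<beta> d (\<lambda>t p Q. SUP n. V n t p Q) t p Q N
     = (SUP n. action_value K \<gamma> \<alpha> \<beta> d (V n) t p Q N)"
proof -
  let ?R = "(Q - N) \<union> {t}"
  have sets_K: "sets (K p) = sets borel"
    by (rule subprob_measurableD(2)[OF measurable_prob_algebraD[OF K]]) simp
  have "(\<integral>\<^sup>+ p'. (SUP n. V n (Suc t) p' ?R) \<partial>K p) = (SUP n. \<integral>\<^sup>+ p'. V n (Suc t) p' ?R \<partial>K p)"
  proof (rule nn_integral_monotone_convergence_SUP)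
    show "incseq (\<lambda>n p'. V n (Suc t) p' ?R)"
      using inc by (auto simp: incseq_def le_fun_def)
    show "(\<lambda>p'. V n (Suc t) p' ?R) \<in> borel_measurable (K p)" for n
      using meas measurable_cong_sets[OF sets_K refl] by blast
  qed
  then show ?thesis
    unfolding action_value_def
    by (simp add: SUP_mult_left_ennreal ennreal_SUP_add_right)
qed

lemma min_SUP_le_SUP_min:
  fixes A B :: "nat \<Rightarrow> 'a::{complete_linorder, dense_linorder}"
  assumes A: "incseq A" and B: "incseq B"
  shows "min (SUP n. A n) (SUP n. B n) \<le> (SUP n. min (A n) (B n))"
proof (rule dense_le)
  fix x assume x: "x < min (SUP n. A n) (SUP n. B n)"
  then obtain i j where "x < A i" "x < B j" by (auto simp: less_SUP_iff)
  then have "x < A (max i j)" "x < B (max i j)"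
    using A B by (meson max.cobounded1 max.cobounded2 incseq_def order_less_le_trans)+
  then have "x \<le> min (A (max i j)) (B (max i j))" by (simp add: less_imp_le)
  also have "\<dots> \<le> (SUP n. min (A n) (B n))" by (rule SUP_upper) simp
  finally show "x \<le> (SUP n. min (A n) (B n))" .
qed

lemma measurable_stage_cost [measurable]:
  "(\<lambda>p. stage_cost \<alpha> \<beta> d t p Q N) \<in> borel_measurable borel"
  unfolding stage_cost_def by measurable

lemma measurable_kernel_nn_integral:
  assumes K: "K \<in> borel \<rightarrow>\<^sub>M prob_algebra borel" and f: "f \<in> borel_measurable borel"
  shows "(\<lambda>p. \<integral>\<^sup>+ p'. f p' \<partial>K p) \<in> borel_measurable borel"
  using measurable_comp[OF measurable_prob_algebraD[OF K] nn_integral_measurable_subprob_algebra[OF f]]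
  by (simp add: o_def)

lemma measurable_action_value:
  assumes K: "K \<in> borel \<rightarrow>\<^sub>M prob_algebra borel"
    and V: "(\<lambda>p. V (Suc t) p ((Q - N) \<union> {t})) \<in> borel_measurable borel"
  shows "(\<lambda>p. action_value K \<gamma> \<alpha> \<beta> d V t p Q N) \<in> borel_measurable borel"
  unfolding action_value_def using measurable_kernel_nn_integral[OF K V] by measurable

lemma stage_cost_publish_all_mono:
  assumes "\<beta> \<ge> 0" "p \<ge> 0" "Q' \<subseteq> Q"
  shows "stage_cost 0 \<beta> d t p Q' Q' \<le> stage_cost 0 \<beta> d t p Q Q"
  using assms by (auto simp: stage_cost_def pub_cost_def delay_cost_def)

lemma stage_cost_wait_mono:
  assumes "\<And>\<tau> w. d \<tau> w \<ge> 0" "finite Q" "Q' \<subseteq> Q"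
  shows "stage_cost 0 \<beta> d t p Q' {} \<le> stage_cost 0 \<beta> d t p Q {}"
  using assms unfolding stage_cost_def pub_cost_def delay_cost_def
  by (auto intro: sum_mono2)

lemma stage_cost_publish_all_le:
  assumes "\<And>\<tau> w. d \<tau> w \<ge> 0" "N \<subseteq> Q" "N \<noteq> {}"
  shows "stage_cost 0 \<beta> d t p Q Q \<le> stage_cost 0 \<beta> d t p Q N"
  using assms unfolding stage_cost_def pub_cost_def delay_cost_def
  by (auto intro: sum_nonneg)

primrec batch_value ::
  "(real \<Rightarrow> real measure) \<Rightarrow> real \<Rightarrow> real \<Rightarrow> (nat \<Rightarrow> nat \<Rightarrow> real)
     \<Rightarrow> nat \<Rightarrow> nat \<Rightarrow> real \<Rightarrow> nat set \<Rightarrow> ennreal" where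
  "batch_value K \<gamma> \<beta> d 0 t p Q = 0"
| "batch_value K \<gamma> \<beta> d (Suc n) t p Q =
     min (action_value K \<gamma> 0 \<beta> d (batch_value K \<gamma> \<beta> d n) t p Q Q)
         (action_value K \<gamma> 0 \<beta> d (batch_value K \<gamma> \<beta> d n) t p Q {})"

definition batch_value_limit ::
  "(real \<Rightarrow> real measure) \<Rightarrow> real \<Rightarrow> real \<Rightarrow> (nat \<Rightarrow> nat \<Rightarrow> real)
     \<Rightarrow> nat \<Rightarrow> real \<Rightarrow> nat set \<Rightarrow> ennreal" where
  "batch_value_limit K \<gamma> \<beta> d t p Q = (SUP n. batch_value K \<gamma> \<beta> d n t p Q)"

lemma measurable_batch_value:
  assumes K: "K \<in> borel \<rightarrow>\<^sub>M prob_algebra borel"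
  shows "(\<lambda>p. batch_value K \<gamma> \<beta> d n t p Q) \<in> borel_measurable borel"
proof (induction n arbitrary: t Q)
  case (Suc n)
  have "(\<lambda>p. action_value K \<gamma> 0 \<beta> d (batch_value K \<gamma> \<beta> d n) t p Q N) \<in> borel_measurable borel" for N
    by (rule measurable_action_value[OF K Suc.IH])
  then show ?case by simp measurable
qed simp

lemma measurable_batch_value_limit:
  assumes K: "K \<in> borel \<rightarrow>\<^sub>M prob_algebra borel"
  shows "(\<lambda>p. batch_value_limit K \<gamma> \<beta> d t p Q) \<in> borel_measurable borel"
  unfolding batch_value_limit_def using measurable_batch_value[OF K] by measurable

lemma batch_value_le_Suc: "batch_value K \<gamma> \<beta> d n \<le> batch_value K \<gamma> \<beta> d (Suc n)"
proof (induction n)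
  case (Suc n)
  then have "action_value K \<gamma> 0 \<beta> d (batch_value K \<gamma> \<beta> d n) t p Q N
      \<le> action_value K \<gamma> 0 \<beta> d (batch_value K \<gamma> \<beta> d (Suc n)) t p Q N" for t p Q N
    by (intro action_value_le) (auto simp: le_fun_def)
  then show ?case
    unfolding le_fun_def batch_value.simps(2) by (blast intro: min.mono)
qed (simp add: le_fun_def)

lemma incseq_batch_value: "incseq (batch_value K \<gamma> \<beta> d)"
  by (rule incseq_SucI) (rule batch_value_le_Suc)

text \<open>Finiteness of \<open>Q\<close> matters: \<open>delay_cost\<close> of an infinite queue is \<open>0\<close>.\<close>
lemma batch_value_mono_queue:
  assumes prices: "\<And>p. p \<ge> 0 \<Longrightarrow> AE p' in K p. p' \<ge> 0"
    and delay: "\<And>\<tau> w. d \<tau> w \<ge> 0" and beta: "\<beta> \<ge> 0"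
  shows "finite Q \<Longrightarrow> Q' \<subseteq> Q \<Longrightarrow> p \<ge> 0
    \<Longrightarrow> batch_value K \<gamma> \<beta> d n t p Q' \<le> batch_value K \<gamma> \<beta> d n t p Q"
proof (induction n arbitrary: t p Q Q')
  case (Suc n)
  have "action_value K \<gamma> 0 \<beta> d (batch_value K \<gamma> \<beta> d n) t p Q' Q'
      \<le> action_value K \<gamma> 0 \<beta> d (batch_value K \<gamma> \<beta> d n) t p Q Q"
    using Suc.prems beta by (intro action_value_le stage_cost_publish_all_mono) auto
  moreover have "action_value K \<gamma> 0 \<beta> d (batch_value K \<gamma> \<beta> d n) t p Q' {}
      \<le> action_value K \<gamma> 0 \<beta> d (batch_value K \<gamma> \<beta> d n) t p Q {}"
  proof (rule action_value_le)
    show "stage_cost 0 \<beta> d t p Q' {} \<le> stage_cost 0 \<beta> d t p Q {}"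
      using Suc.prems by (intro stage_cost_wait_mono delay) auto
    show "AE p' in K p. batch_value K \<gamma> \<beta> d n (Suc t) p' ((Q' - {}) \<union> {t})
        \<le> batch_value K \<gamma> \<beta> d n (Suc t) p' ((Q - {}) \<union> {t})"
      using prices[OF \<open>p \<ge> 0\<close>] by eventually_elim (use Suc.prems in \<open>auto intro!: Suc.IH\<close>)
  qed
  ultimately show ?case unfolding batch_value.simps by (rule min.mono)
qed simp

lemma batch_value_Suc_le_action_value:
  assumes prices: "\<And>p. p \<ge> 0 \<Longrightarrow> AE p' in K p. p' \<ge> 0"
    and delay: "\<And>\<tau> w. d \<tau> w \<ge> 0" and beta: "\<beta> \<ge> 0"
    and "finite Q" "N \<subseteq> Q" "p \<ge> 0"
  shows "batch_value K \<gamma> \<beta> d (Suc n) t p Q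
    \<le> action_value K \<gamma> 0 \<beta> d (batch_value K \<gamma> \<beta> d n) t p Q N"
proof (cases "N = {}")
  case False
  have "action_value K \<gamma> 0 \<beta> d (batch_value K \<gamma> \<beta> d n) t p Q Q
      \<le> action_value K \<gamma> 0 \<beta> d (batch_value K \<gamma> \<beta> d n) t p Q N"
  proof (rule action_value_le)
    show "stage_cost 0 \<beta> d t p Q Q \<le> stage_cost 0 \<beta> d t p Q N"
      using False assms by (intro stage_cost_publish_all_le delay)
    show "AE p' in K p. batch_value K \<gamma> \<beta> d n (Suc t) p' ((Q - Q) \<union> {t})
        \<le> batch_value K \<gamma> \<beta> d n (Suc t) p' ((Q - N) \<union> {t})"
      using prices[OF \<open>p \<ge> 0\<close>]
      by eventually_elim (use \<open>finite Q\<close> in \<open>auto intro: batch_value_mono_queue[OF prices delay beta]\<close>)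
  qed
  then show ?thesis by (simp add: min.coboundedI1)
qed simp

lemma batch_value_le_horizon_cost:
  assumes prices: "\<And>p. p \<ge> 0 \<Longrightarrow> AE p' in K p. p' \<ge> 0"
    and delay: "\<And>\<tau> w. d \<tau> w \<ge> 0" and beta: "\<beta> \<ge> 0" and \<sigma>: "admissible \<sigma>"
  shows "finite Q \<Longrightarrow> p \<ge> 0 \<Longrightarrow> batch_value K \<gamma> \<beta> d n t p Q \<le> horizon_cost K \<gamma> 0 \<beta> d \<sigma> n t p Q"
proof (induction n arbitrary: t p Q)
  case (Suc n)
  have "\<sigma> t Q p \<subseteq> Q" using \<sigma> by (simp add: admissible_def)
  then have "batch_value K \<gamma> \<beta> d (Suc n) t p Q
      \<le> action_value K \<gamma> 0 \<beta> d (batch_value K \<gamma> \<beta> d n) t p Q (\<sigma> t Q p)"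
    using Suc.prems by (intro batch_value_Suc_le_action_value[OF prices delay beta])
  also have "\<dots> \<le> action_value K \<gamma> 0 \<beta> d (horizon_cost K \<gamma> 0 \<beta> d \<sigma> n) t p Q (\<sigma> t Q p)"
  proof (rule action_value_le[OF order_refl])
    show "AE p' in K p. batch_value K \<gamma> \<beta> d n (Suc t) p' ((Q - \<sigma> t Q p) \<union> {t})
        \<le> horizon_cost K \<gamma> 0 \<beta> d \<sigma> n (Suc t) p' ((Q - \<sigma> t Q p) \<union> {t})"
      using prices[OF \<open>p \<ge> 0\<close>] by eventually_elim (use Suc.prems in \<open>auto intro!: Suc.IH\<close>)
  qed
  finally show ?case by (simp only: horizon_cost_Suc)
qed simp

lemma batch_value_limit_eq_SUP:
  "batch_value_limit K \<gamma> \<beta> d = (\<lambda>t p Q. SUP n. batch_value K \<gamma> \<beta> d n t p Q)"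
  by (simp add: batch_value_limit_def fun_eq_iff)

lemma batch_value_limit_bellman:
  assumes K: "K \<in> borel \<rightarrow>\<^sub>M prob_algebra borel"
  shows "min (action_value K \<gamma> 0 \<beta> d (batch_value_limit K \<gamma> \<beta> d) t p Q Q)
             (action_value K \<gamma> 0 \<beta> d (batch_value_limit K \<gamma> \<beta> d) t p Q {})
    \<le> batch_value_limit K \<gamma> \<beta> d t p Q"
proof -
  let ?A = "\<lambda>N n. action_value K \<gamma> 0 \<beta> d (batch_value K \<gamma> \<beta> d n) t p Q N"
  have limit: "action_value K \<gamma> 0 \<beta> d (batch_value_limit K \<gamma> \<beta> d) t p Q N = (SUP n. ?A N n)" for N
    unfolding batch_value_limit_eq_SUP
    by (rule action_value_SUP[OF K incseq_batch_value measurable_batch_value[OF K]])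
  have "incseq (?A N)" for N
    by (intro incseq_SucI action_value_le) (use batch_value_le_Suc in \<open>auto simp: le_fun_def\<close>)
  then have "min (SUP n. ?A Q n) (SUP n. ?A {} n) \<le> (SUP n. min (?A Q n) (?A {} n))"
    by (intro min_SUP_le_SUP_min)
  also have "\<dots> = (SUP n. batch_value K \<gamma> \<beta> d (Suc n) t p Q)"
    by simp
  also have "\<dots> \<le> batch_value_limit K \<gamma> \<beta> d t p Q"
    unfolding batch_value_limit_def by (rule SUP_least) (rule SUP_upper, simp)
  finally show ?thesis by (simp only: limit)
qed

definition greedy_batch_policy ::
  "(real \<Rightarrow> real measure) \<Rightarrow> real \<Rightarrow> real \<Rightarrow> (nat \<Rightarrow> nat \<Rightarrow> real) \<Rightarrow> policy" where
  "greedy_batch_policy K \<gamma> \<beta> d t Q p =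
    (if action_value K \<gamma> 0 \<beta> d (batch_value_limit K \<gamma> \<beta> d) t p Q Q
        \<le> action_value K \<gamma> 0 \<beta> d (batch_value_limit K \<gamma> \<beta> d) t p Q {}
     then Q else {})"

lemma greedy_batch_policy_all_or_nothing:
  "greedy_batch_policy K \<gamma> \<beta> d t Q p = Q \<or> greedy_batch_policy K \<gamma> \<beta> d t Q p = {}"
  by (simp add: greedy_batch_policy_def)

lemma action_value_greedy_batch_policy:
  "action_value K \<gamma> 0 \<beta> d (batch_value_limit K \<gamma> \<beta> d) t p Q (greedy_batch_policy K \<gamma> \<beta> d t Q p)
   = min (action_value K \<gamma> 0 \<beta> d (batch_value_limit K \<gamma> \<beta> d) t p Q Q)
         (action_value K \<gamma> 0 \<beta> d (batch_value_limit K \<gamma> \<beta> d) t p Q {})"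
  by (simp add: greedy_batch_policy_def min_def)

lemma admissible_greedy_batch_policy:
  assumes K: "K \<in> borel \<rightarrow>\<^sub>M prob_algebra borel"
  shows "admissible (greedy_batch_policy K \<gamma> \<beta> d)"
  unfolding admissible_def
proof (intro conjI allI impI)
  show "greedy_batch_policy K \<gamma> \<beta> d t Q p \<subseteq> Q" for t Q p
    by (simp add: greedy_batch_policy_def)
  fix t and Q :: "nat set"
  have "(\<lambda>p. action_value K \<gamma> 0 \<beta> d (batch_value_limit K \<gamma> \<beta> d) t p Q N) \<in> borel_measurable borel" for N
    by (rule measurable_action_value[OF K measurable_batch_value_limit[OF K]])
  then show "(\<lambda>p. greedy_batch_policy K \<gamma> \<beta> d t Q p) \<in> borel \<rightarrow>\<^sub>M count_space UNIV"
    unfolding greedy_batch_policy_def by measurable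
qed

lemma horizon_cost_greedy_le_batch_value_limit:
  assumes K: "K \<in> borel \<rightarrow>\<^sub>M prob_algebra borel"
    and prices: "\<And>p. p \<ge> 0 \<Longrightarrow> AE p' in K p. p' \<ge> 0"
  shows "p \<ge> 0 \<Longrightarrow> horizon_cost K \<gamma> 0 \<beta> d (greedy_batch_policy K \<gamma> \<beta> d) n t p Q
    \<le> batch_value_limit K \<gamma> \<beta> d t p Q"
proof (induction n arbitrary: t p Q)
  case (Suc n)
  let ?\<pi> = "greedy_batch_policy K \<gamma> \<beta> d"
  have "horizon_cost K \<gamma> 0 \<beta> d ?\<pi> (Suc n) t p Q
      \<le> action_value K \<gamma> 0 \<beta> d (batch_value_limit K \<gamma> \<beta> d) t p Q (?\<pi> t Q p)"
    unfolding horizon_cost_Suc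
  proof (rule action_value_le[OF order_refl])
    show "AE p' in K p. horizon_cost K \<gamma> 0 \<beta> d ?\<pi> n (Suc t) p' ((Q - ?\<pi> t Q p) \<union> {t})
        \<le> batch_value_limit K \<gamma> \<beta> d (Suc t) p' ((Q - ?\<pi> t Q p) \<union> {t})"
      using prices[OF Suc.prems] by eventually_elim (rule Suc.IH)
  qed
  also have "\<dots> \<le> batch_value_limit K \<gamma> \<beta> d t p Q"
    unfolding action_value_greedy_batch_policy by (rule batch_value_limit_bellman[OF K])
  finally show ?case .
qed simp

theorem lemma1:
  fixes K :: "real \<Rightarrow> real measure" and \<gamma> \<beta> p0 :: real
    and d :: "nat \<Rightarrow> nat \<Rightarrow> real"
  assumes kernel: "K \<in> borel \<rightarrow>\<^sub>M prob_algebra borel"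
    and nonneg_prices: "\<And>p. p \<ge> 0 \<Longrightarrow> AE p' in K p. p' \<ge> 0"
    and p0: "p0 \<ge> 0"
    and gamma: "0 < \<gamma>" "\<gamma> < 1"
    and beta: "\<beta> \<ge> 0"
    and delay_nonneg: "\<And>\<tau> w. d \<tau> w \<ge> 0"
  shows "\<exists>\<pi>. optimal K \<gamma> 0 \<beta> d p0 \<pi> \<and> (\<forall>t Q p. \<pi> t Q p = Q \<or> \<pi> t Q p = {})"
proof (intro exI conjI allI)
  let ?\<pi> = "greedy_batch_policy K \<gamma> \<beta> d"
  show "?\<pi> t Q p = Q \<or> ?\<pi> t Q p = {}" for t Q p
    by (rule greedy_batch_policy_all_or_nothing)
  show "optimal K \<gamma> 0 \<beta> d p0 ?\<pi>"
    unfolding optimal_def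
  proof (intro conjI allI impI)
    show "admissible ?\<pi>" by (rule admissible_greedy_batch_policy[OF kernel])
    fix \<sigma> assume "admissible \<sigma>"
    have "total_cost K \<gamma> 0 \<beta> d p0 ?\<pi> \<le> batch_value_limit K \<gamma> \<beta> d 0 p0 {}"
      unfolding total_cost_def
      by (rule SUP_least, rule horizon_cost_greedy_le_batch_value_limit[OF kernel nonneg_prices p0])
    also have "\<dots> \<le> total_cost K \<gamma> 0 \<beta> d p0 \<sigma>"
      unfolding total_cost_def batch_value_limit_def
      using batch_value_le_horizon_cost[OF nonneg_prices delay_nonneg beta \<open>admissible \<sigma>\<close>] p0
      by (intro SUP_mono') simp
    finally show "total_cost K \<gamma> 0 \<beta> d p0 ?\<pi> \<le> total_cost K \<gamma> 0 \<beta> d p0 \<sigma>" .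
  qed
qed

end
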